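(* Let $i\in\mathbb{N}_0$ and let $\alpha,\beta,\epsilon\in\mathbb{C}$. Then $$F^{1:1;2}_{1:0;1}\left[\begin{matrix}\alpha: & \epsilon\,; & \beta-\epsilon,\ 1-\alpha-\epsilon+i\,;\\ \beta: & -\,; & 1-\alpha-\epsilon+\beta+i\,;\end{matrix}\ \tfrac12,\ \tfrac12\right] =\frac{2^{i-\alpha}\,\Gamma(\beta-\epsilon-\alpha+i+1)\,\Gamma(\alpha-i)}{\Gamma(1-2\alpha-\epsilon+\beta+i)\,\Gamma(\alpha)}\sum_{r=0}^{i}(-1)^r\binom{i}{r}\frac{\Gamma\!\left(\frac{1-2\alpha-\epsilon+\beta+i+r}{2}\right)}{\Gamma\!\left(\frac{\beta-\epsilon-i+r+1}{2}\right)}$$ and $$F^{1:1;2}_{1:0;1}\left[\begin{matrix}\alpha: & \epsilon\,; & \beta-\epsilon,\ 1-\alpha-\epsilon-i\,;\\ \beta: & -\,; & 1-\alpha-\epsilon+\beta-i\,;\end{matrix}\ \tfrac12,\ \tfrac12\right] =\frac{2^{-\alpha-i}\,\Gamma(\beta-\epsilon-\alpha-i+1)}{\Gamma(1-2\alpha-\epsilon+\beta-i)}\sum_{r=0}^{i}\binom{i}{r}\frac{\Gamma\!\left(\frac{1-2\alpha-\epsilon+\beta-i+r}{2}\right)}{\Gamma\!\left(\frac{\beta-\epsilon-i+r+1}{2}\right)}.$$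
   Context: For $\lambda\in\mathbb{C}$ and $n\in\mathbb{N}_0$, $(\lambda)_0=1$ and $(\lambda)_n=\lambda(\lambda+1)\cdots(\lambda+n-1)$; $\Gamma$ is Euler's Gamma function and $\binom{i}{r}$ the binomial coefficient. The (generalized) Kampé de Fériet function is defined by $$F^{H:A;B}_{G:C;D}\left[\begin{matrix}(h_H): & (a_A)\,; & (b_B)\,;\\ (g_G): & (c_C)\,; & (d_D)\,;\end{matrix}\ x,\ y\right]=\sum_{m=0}^\infty\sum_{n=0}^\infty\frac{\prod_{j=1}^H(h_j)_{m+n}\prod_{j=1}^A(a_j)_m\prod_{j=1}^B(b_j)_n}{\prod_{j=1}^G(g_j)_{m+n}\prod_{j=1}^C(c_j)_m\prod_{j=1}^D(d_j)_n}\frac{x^m}{m!}\frac{y^n}{n!},$$ where a dash "$-$" denotes an empty list of parameters (empty products equal $1$). Parameters are tacitly assumed to be such that the double series converges, no denominator parameter is a non-positive integer, and all Gamma values appearing are finite. *)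

theory Defs
  imports "HOL-Analysis.Analysis"
begin

text \<open>General term of the Kampe de Feriet double series
  F^{H:A;B}_{G:C;D}[(h):(a);(b);(g):(c);(d); x, y].
  Parameter lists are Isabelle lists; the empty list stands for a dash.\<close>
definition kdf_term ::
  "complex list \<Rightarrow> complex list \<Rightarrow> complex list \<Rightarrow>
   complex list \<Rightarrow> complex list \<Rightarrow> complex list \<Rightarrow>
   complex \<Rightarrow> complex \<Rightarrow> nat \<Rightarrow> nat \<Rightarrow> complex" where
  "kdf_term hs as bs gs cs ds x y m n =
     (prod_list (map (\<lambda>h. pochhammer h (m + n)) hs)
      * prod_list (map (\<lambda>a. pochhammer a m) as)
      * prod_list (map (\<lambda>b. pochhammer b n) bs))
     / (prod_list (map (\<lambda>g. pochhammer g (m + n)) gs)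
      * prod_list (map (\<lambda>c. pochhammer c m) cs)
      * prod_list (map (\<lambda>d. pochhammer d n) ds))
     * (x ^ m / fact m) * (y ^ n / fact n)"

text \<open>Convergence of the double series (over all pairs (m,n); for complex
  terms this is absolute convergence).\<close>
definition kdf_converges ::
  "complex list \<Rightarrow> complex list \<Rightarrow> complex list \<Rightarrow>
   complex list \<Rightarrow> complex list \<Rightarrow> complex list \<Rightarrow>
   complex \<Rightarrow> complex \<Rightarrow> bool" where
  "kdf_converges hs as bs gs cs ds x y \<longleftrightarrow>
     (\<lambda>(m, n). kdf_term hs as bs gs cs ds x y m n) summable_on UNIV"

definition kdf ::
  "complex list \<Rightarrow> complex list \<Rightarrow> complex list \<Rightarrow>
   complex list \<Rightarrow> complex list \<Rightarrow> complex list \<Rightarrow>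
   complex \<Rightarrow> complex \<Rightarrow> complex" where
  "kdf hs as bs gs cs ds x y =
     (\<Sum>\<^sub>\<infinity>(m, n) \<in> UNIV. kdf_term hs as bs gs cs ds x y m n)"

end

theory Submission
  imports Defs
begin

text \<open>
  Summing the double series along the diagonals \<open>m + n = N\<close>, every diagonal sum is a
  coefficient of Euler's transformation \<open>(1 - z)\<^sup>-\<^sup>\<epsilon> F(A, B; C; z) = F(C - A, C - B; C; z)\<close>
  for \<open>C = A + B + \<epsilon>\<close>, so the Kampe de Feriet function equals
  \<open>\<Gamma>(d) F(\<alpha>, 1 - \<alpha> \<plusminus> i; d; 1/2)\<close> with \<open>d = 1 - \<alpha> - \<epsilon> + \<beta> \<plusminus> i\<close>. For \<open>i = 0\<close>
  this is Bailey's theorem, which holds because both sides, divided by \<open>\<Gamma>(d)\<close>, obey the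
  same recurrence under \<open>d \<mapsto> d + 2\<close>, while \<open>\<Gamma>(d)\<close> times either side tends to \<open>1\<close> as
  \<open>d \<rightarrow> \<infinity>\<close>. The contiguous relations in the first and in the second parameter carry
  Bailey's value to \<open>a + b = 1 \<plusminus> i\<close>, which produces the binomial sums, and Legendre's
  duplication formula turns each of their terms into the stated Gamma quotient.
\<close>

section \<open>Series, Pochhammer symbols and the Gamma function\<close>

lemma of_nat_add_1_neq_0 [simp]: "(of_nat n + 1 :: 'a::semiring_char_0) \<noteq> 0"
  using of_nat_neq_0[of n] by (metis add.commute of_nat_Suc)

lemma LIMSEQ_add_of_nat_divide_add_of_nat:
  fixes a b :: "'a::real_normed_field"
  shows "(\<lambda>n. (a + of_nat n) / (b + of_nat n)) \<longlonglongrightarrow> 1"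
proof -
  have "(\<lambda>n. (a / of_nat n + 1) / (b / of_nat n + 1)) \<longlonglongrightarrow> (0 + 1) / (0 + 1)"
    by (intro tendsto_intros) auto
  moreover have "eventually (\<lambda>n. (a / of_nat n + 1) / (b / of_nat n + 1)
                                  = (a + of_nat n) / (b + of_nat n)) sequentially"
    using eventually_gt_at_top[of "0::nat"]
    by eventually_elim (simp add: divide_add_eq_iff)
  ultimately show ?thesis
    by (simp add: tendsto_cong)
qed

lemma summable_ratio_test_LIMSEQ:
  fixes f :: "nat \<Rightarrow> 'a::banach"
  assumes ratio: "eventually (\<lambda>n. norm (f (Suc n)) \<le> r n * norm (f n)) sequentially"
    and lim: "r \<longlonglongrightarrow> L" and "L < 1"
  shows "summable f"
proof -
  have "eventually (\<lambda>n. r n < (1 + L) / 2) sequentially"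
    using lim \<open>L < 1\<close> by (intro order_tendstoD) auto
  with ratio have "eventually (\<lambda>n. norm (f (Suc n)) \<le> (1 + L) / 2 * norm (f n)) sequentially"
    by eventually_elim (meson mult_right_mono norm_ge_zero order.trans less_imp_le)
  then obtain N where "\<And>n. n \<ge> N \<Longrightarrow> norm (f (Suc n)) \<le> (1 + L) / 2 * norm (f n)"
    by (auto simp: eventually_sequentially)
  with \<open>L < 1\<close> show ?thesis
    by (intro summable_ratio_test[of "(1 + L) / 2" N]) auto
qed

lemma sums_shift_half:
  fixes f g :: "nat \<Rightarrow> complex"
  assumes "g sums s" and "f 0 = 0" and "\<And>n. f (Suc n) = g n / 2"
  shows "f sums (s / 2)"
proof -
  have "(\<lambda>n. f (Suc n)) sums (s / 2)"
    unfolding assms(3) by (intro sums_divide assms(1))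
  with assms(2) show ?thesis
    by (simp add: sums_Suc_iff)
qed

lemma infsum_diagonal:
  fixes f :: "nat \<times> nat \<Rightarrow> 'a::banach"
  assumes "f summable_on UNIV"
  shows "infsum f UNIV = (\<Sum>N. \<Sum>n\<le>N. f (N - n, n))"
proof -
  define g where "g = (\<lambda>(N::nat, n::nat). (N - n, n))"
  define S where "S = (SIGMA N:(UNIV::nat set). {..N})"
  have bij: "bij_betw g S UNIV"
    by (rule bij_betw_byWitness[where f' = "\<lambda>(m, n). (m + n, n)"]) (auto simp: g_def S_def)
  have "(\<lambda>x. f (g x)) summable_on S"
    using summable_on_reindex_bij_betw[OF bij, of f] assms by simp
  then have summable: "(\<lambda>(N, n). f (N - n, n)) summable_on (SIGMA N:UNIV. {..N})"
    by (simp add: S_def g_def case_prod_beta')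
  have "infsum f UNIV = infsum (\<lambda>(N, n). f (N - n, n)) (SIGMA N:UNIV. {..N})"
    using infsum_reindex_bij_betw[OF bij, of f] by (simp add: S_def g_def case_prod_beta')
  also have "\<dots> = infsum (\<lambda>N. \<Sum>n\<le>N. f (N - n, n)) UNIV"
    using infsum_Sigma'_banach[OF summable] by simp
  also have "\<dots> = (\<Sum>N. \<Sum>n\<le>N. f (N - n, n))"
  proof -
    have "(\<lambda>N. \<Sum>n\<le>N. f (N - n, n)) summable_on UNIV"
      using summable_on_Sigma_banach[OF summable] by simp
    then show ?thesis
      using has_sum_imp_sums[OF has_sum_infsum] sums_unique by blast
  qed
  finally show ?thesis .
qed

lemma sum_choose_Suc_split:
  fixes f :: "nat \<Rightarrow> 'a::comm_semiring_1"
  shows "(\<Sum>r\<le>Suc i. of_nat (Suc i choose r) * f r)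
           = (\<Sum>r\<le>i. of_nat (i choose r) * f r) + (\<Sum>r\<le>i. of_nat (i choose r) * f (Suc r))"
proof -
  have "(\<Sum>r\<le>Suc i. of_nat (Suc i choose r) * f r) = f 0 + (\<Sum>r\<le>i. of_nat (Suc i choose Suc r) * f (Suc r))"
    by (subst sum.atMost_Suc_shift) simp
  also have "\<dots> = (f 0 + (\<Sum>r\<le>i. of_nat (i choose Suc r) * f (Suc r))) + (\<Sum>r\<le>i. of_nat (i choose r) * f (Suc r))"
    by (simp add: sum.distrib algebra_simps)
  also have "f 0 + (\<Sum>r\<le>i. of_nat (i choose Suc r) * f (Suc r)) = (\<Sum>r\<le>Suc i. of_nat (i choose r) * f r)"
    by (subst sum.atMost_Suc_shift) simp
  also have "\<dots> = (\<Sum>r\<le>i. of_nat (i choose r) * f r)"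
    by (simp add: binomial_eq_0)
  finally show ?thesis .
qed

lemma iterate_recurrence:
  fixes f g :: "'a::comm_semiring_1 \<Rightarrow> 'b::comm_monoid_mult"
  assumes "\<And>x. f x = g x * f (x + h)"
  shows "f x = (\<Prod>k<K. g (x + of_nat k * h)) * f (x + of_nat K * h)"
proof (induction K)
  case (Suc K)
  then show ?case
    using assms[of "x + of_nat K * h"] by (simp add: algebra_simps)
qed simp

lemma not_nonpos_Ints_add_of_nat:
  fixes z :: "'a::ring_1"
  assumes "z \<notin> \<int>\<^sub>\<le>\<^sub>0" shows "z + of_nat n \<notin> \<int>\<^sub>\<le>\<^sub>0"
  using assms nonpos_Ints_diff_Nats[of "z + of_nat n" "of_nat n"] by auto

lemma not_nonpos_Ints_diff_of_nat:
  fixes z :: "'a::ring_1"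
  assumes "z - of_nat n \<notin> \<int>\<^sub>\<le>\<^sub>0" shows "z \<notin> \<int>\<^sub>\<le>\<^sub>0"
  using assms nonpos_Ints_diff_Nats[of z "of_nat n"] by auto

lemma not_nonpos_Ints_if_Re_pos: "0 < Re z \<Longrightarrow> z \<notin> \<int>\<^sub>\<le>\<^sub>0"
  by (auto elim!: nonpos_Ints_cases)

lemma not_nonpos_Ints_half:
  fixes w :: complex
  assumes "w \<notin> \<int>\<^sub>\<le>\<^sub>0"
  shows "w / 2 \<notin> \<int>\<^sub>\<le>\<^sub>0" and "(w + 1) / 2 \<notin> \<int>\<^sub>\<le>\<^sub>0"
proof -
  have "w = w / 2 * 2" and "w = (w + 1) / 2 * 2 - 1"
    by (simp_all add: field_simps)
  moreover have "z * 2 \<in> \<int>\<^sub>\<le>\<^sub>0" and "z * 2 - 1 \<in> \<int>\<^sub>\<le>\<^sub>0" if "z \<in> \<int>\<^sub>\<le>\<^sub>0" for z :: complex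
    using that nonpos_Ints_mult_Nats[of z 2] nonpos_Ints_diff_Nats[of "z * 2" 1] by auto
  ultimately show "w / 2 \<notin> \<int>\<^sub>\<le>\<^sub>0" and "(w + 1) / 2 \<notin> \<int>\<^sub>\<le>\<^sub>0"
    using assms by metis+
qed

lemma pochhammer_neq_0_if_not_nonpos_Ints:
  fixes z :: complex
  assumes "z \<notin> \<int>\<^sub>\<le>\<^sub>0" shows "pochhammer z n \<noteq> 0"
  using assms by (auto simp: pochhammer_eq_0_iff)

lemma pochhammer_nonneg_real: "0 \<le> (x::real) \<Longrightarrow> 0 \<le> pochhammer x n"
  by (induction n) (auto simp: pochhammer_Suc)

lemma pochhammer_mono_real: "0 \<le> (x::real) \<Longrightarrow> x \<le> y \<Longrightarrow> pochhammer x n \<le> pochhammer y n"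
  by (induction n) (auto simp: pochhammer_Suc intro!: mult_mono pochhammer_nonneg_real)

lemma norm_pochhammer_le: "norm (pochhammer (z::'a::real_normed_field) n) \<le> pochhammer (norm z) n"
proof (induction n)
  case (Suc n)
  have "norm (pochhammer z (Suc n)) = norm (pochhammer z n) * norm (z + of_nat n)"
    by (simp add: pochhammer_Suc norm_mult)
  also have "\<dots> \<le> pochhammer (norm z) n * (norm z + of_nat n)"
    using Suc norm_triangle_ineq[of z "of_nat n"] by (intro mult_mono) (auto simp: pochhammer_nonneg_real)
  finally show ?case
    by (simp add: pochhammer_Suc)
qed simp

lemma pochhammer_Re_le_norm: "0 \<le> Re z \<Longrightarrow> pochhammer (Re z) n \<le> norm (pochhammer z n)"
proof (induction n)
  case (Suc n)
  have "pochhammer (Re z) (Suc n) = pochhammer (Re z) n * (Re z + of_nat n)"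
    by (simp add: pochhammer_Suc)
  also have "\<dots> \<le> norm (pochhammer z n) * norm (z + of_nat n)"
    using Suc complex_Re_le_cmod[of "z + of_nat n"] by (intro mult_mono) auto
  finally show ?case
    by (simp add: pochhammer_Suc norm_mult)
qed simp

lemma pochhammer_Suc_divide_le:
  fixes x y :: real
  assumes "0 < x" and "x \<le> y"
  shows "pochhammer x (Suc n) / pochhammer y (Suc n) \<le> x / y"
proof (induction n)
  case (Suc n)
  have "pochhammer x (Suc (Suc n)) / pochhammer y (Suc (Suc n))
          = pochhammer x (Suc n) / pochhammer y (Suc n) * ((x + of_nat (Suc n)) / (y + of_nat (Suc n)))"
    by (simp add: pochhammer_Suc[of _ "Suc n"])
  also have "\<dots> \<le> x / y * 1"
    using Suc assms by (intro mult_mono) (auto intro!: divide_nonneg_nonneg pochhammer_nonneg_real)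
  finally show ?case
    by simp
qed simp

lemma pochhammer_divide_fact_Suc:
  fixes e :: complex
  shows "pochhammer e (Suc m) / fact (Suc m) * (of_nat m + 1) = pochhammer e m / fact m * (e + of_nat m)"
proof -
  \<comment> \<open>with atomic denominators \<open>field_simps\<close> can see that they are nonzero\<close>
  have cancel: "x * u / (m * f) * m = x / f * u" if "m \<noteq> 0" "f \<noteq> 0" for x u m f :: complex
    using that by (simp add: field_simps)
  show ?thesis
    unfolding pochhammer_Suc fact_Suc of_nat_Suc add.commute[of 1] by (intro cancel) simp_all
qed

lemma summable_pochhammer_divide_fact_2_power:
  assumes "0 \<le> x"
  shows "summable (\<lambda>n. pochhammer x n / (fact n * 2 ^ n) :: real)"
proof (rule summable_ratio_test_LIMSEQ)
  show "(\<lambda>n. (x + of_nat n) / (1 + of_nat n) / 2) \<longlonglongrightarrow> 1 / 2"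
    using tendsto_divide[OF LIMSEQ_add_of_nat_divide_add_of_nat[of x 1] tendsto_const[of 2]] by simp
  show "eventually (\<lambda>n. norm (pochhammer x (Suc n) / (fact (Suc n) * 2 ^ Suc n))
          \<le> (x + of_nat n) / (1 + of_nat n) / 2 * norm (pochhammer x n / (fact n * 2 ^ n))) sequentially"
    using assms by (intro always_eventually allI)
      (simp add: pochhammer_Suc pochhammer_nonneg_real field_simps abs_of_nonneg)
qed simp

lemma Gamma_quotient_LIMSEQ_off_poles:
  fixes u v p q :: complex
  assumes "u \<notin> \<int>\<^sub>\<le>\<^sub>0" "v \<notin> \<int>\<^sub>\<le>\<^sub>0" "p \<notin> \<int>\<^sub>\<le>\<^sub>0" "q \<notin> \<int>\<^sub>\<le>\<^sub>0" and "u + v = p + q"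
  shows "(\<lambda>n. Gamma (u + of_nat n) * Gamma (v + of_nat n) * rGamma (p + of_nat n) * rGamma (q + of_nat n)) \<longlonglongrightarrow> 1"
proof (rule LIMSEQ_offset[where k = 1])
  \<comment> \<open>\<open>\<Gamma>(z + n + 1) = rGamma_series z n \<cdot> n! n\<^sup>z \<cdot> \<Gamma>(z)\<close>, and the factors \<open>n! n\<^sup>z\<close>
    cancel since \<open>u + v = p + q\<close>\<close>
  define E where "E z n = fact n * exp (z * of_real (ln (of_nat n)))" for z :: complex and n :: nat
  have Gamma_Suc: "Gamma (z + of_nat (n + 1)) = rGamma_series z n * E z n * Gamma z"
    if "z \<notin> \<int>\<^sub>\<le>\<^sub>0" for z n
    using pochhammer_Gamma[OF that, of "Suc n"] that
    by (simp add: rGamma_series_def E_def Gamma_eq_zero_iff field_simps)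
  have "E u n * E v n / (E p n * E q n) = 1" for n
    unfolding E_def using assms(5)
    by (simp add: mult_ac exp_add[symmetric] distrib_right[symmetric])
  then have "Gamma (u + of_nat (n + 1)) * Gamma (v + of_nat (n + 1))
               * rGamma (p + of_nat (n + 1)) * rGamma (q + of_nat (n + 1))
        = (rGamma_series u n * Gamma u) * (rGamma_series v n * Gamma v)
          / ((rGamma_series p n * Gamma p) * (rGamma_series q n * Gamma q))" for n
    unfolding rGamma_inverse_Gamma Gamma_Suc[OF assms(1)] Gamma_Suc[OF assms(2)]
      Gamma_Suc[OF assms(3)] Gamma_Suc[OF assms(4)]
    by (simp add: divide_inverse mult_ac)
  moreover have "(\<lambda>n. (rGamma_series u n * Gamma u) * (rGamma_series v n * Gamma v)
        / ((rGamma_series p n * Gamma p) * (rGamma_series q n * Gamma q)))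
      \<longlonglongrightarrow> (rGamma u * Gamma u) * (rGamma v * Gamma v) / ((rGamma p * Gamma p) * (rGamma q * Gamma q))"
    using assms by (intro tendsto_intros) (auto simp: rGamma_eq_zero_iff Gamma_eq_zero_iff)
  moreover have "rGamma z * Gamma z = 1" if "z \<notin> \<int>\<^sub>\<le>\<^sub>0" for z :: complex
    using that by (simp add: rGamma_inverse_Gamma Gamma_eq_zero_iff)
  ultimately show "(\<lambda>n. Gamma (u + of_nat (n + 1)) * Gamma (v + of_nat (n + 1))
                        * rGamma (p + of_nat (n + 1)) * rGamma (q + of_nat (n + 1))) \<longlonglongrightarrow> 1"
    using assms(1-4) by simp
qed

lemma Gamma_quotient_LIMSEQ:
  fixes u v p q :: complex
  assumes "u + v = p + q"
  shows "(\<lambda>n. Gamma (u + of_nat n) * Gamma (v + of_nat n) * rGamma (p + of_nat n) * rGamma (q + of_nat n)) \<longlonglongrightarrow> 1"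
proof -
  obtain K :: nat where K: "norm u + norm v + norm p + norm q < real K"
    using reals_Archimedean2 by blast
  have "0 < Re (z + of_nat K)" if "norm z < real K" for z :: complex
    using that abs_Re_le_cmod[of z] by simp
  then have "z + of_nat K \<notin> \<int>\<^sub>\<le>\<^sub>0" if "norm z < real K" for z :: complex
    using that by (simp add: not_nonpos_Ints_if_Re_pos)
  moreover have "norm u < real K" "norm v < real K" "norm p < real K" "norm q < real K"
    using K norm_ge_zero[of u] norm_ge_zero[of v] norm_ge_zero[of p] norm_ge_zero[of q] by linarith+
  ultimately have "u + of_nat K \<notin> \<int>\<^sub>\<le>\<^sub>0" "v + of_nat K \<notin> \<int>\<^sub>\<le>\<^sub>0"
    "p + of_nat K \<notin> \<int>\<^sub>\<le>\<^sub>0" "q + of_nat K \<notin> \<int>\<^sub>\<le>\<^sub>0"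
    by blast+
  from Gamma_quotient_LIMSEQ_off_poles[OF this] assms
  have "(\<lambda>n. Gamma (u + of_nat (n + K)) * Gamma (v + of_nat (n + K))
             * rGamma (p + of_nat (n + K)) * rGamma (q + of_nat (n + K))) \<longlonglongrightarrow> 1"
    by (simp add: add_ac)
  then show ?thesis
    by (rule LIMSEQ_offset)
qed

lemma Gamma_duplication_rGamma:
  fixes w :: complex
  assumes "w \<notin> \<int>\<^sub>\<le>\<^sub>0"
  shows "of_real (sqrt pi) * 2 powr (1 - w) = Gamma (w / 2) * Gamma ((w + 1) / 2) * rGamma w"
proof -
  have half: "(w + 1) / 2 = w / 2 + 1 / 2"
    by (simp add: add_divide_distrib)
  have "Gamma (w / 2) * Gamma (w / 2 + 1 / 2)
          = exp ((1 - 2 * (w / 2)) * of_real (ln 2)) * of_real (sqrt pi) * Gamma (2 * (w / 2))"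
    using not_nonpos_Ints_half[OF assms] unfolding half by (rule Gamma_legendre_duplication)
  also have "exp ((1 - 2 * (w / 2)) * of_real (ln 2)) = (2::complex) powr (1 - w)"
    by (simp add: powr_def Ln_of_nat[of 2, simplified])
  finally have "Gamma (w / 2) * Gamma ((w + 1) / 2) = 2 powr (1 - w) * of_real (sqrt pi) * Gamma w"
    unfolding half by simp
  moreover have "Gamma w * rGamma w = 1"
    using assms by (simp add: rGamma_inverse_Gamma Gamma_eq_zero_iff)
  ultimately show ?thesis
    by (metis mult.assoc mult.commute mult_1_right)
qed

section \<open>Gauss's function at 1/2\<close>

text \<open>\<open>rgauss a b c = F(a, b; c; 1/2) / \<Gamma>(c)\<close>; dividing by \<open>\<Gamma>(c)\<close> makes it defined for every \<open>c\<close>.\<close>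

definition rgauss_term :: "complex \<Rightarrow> complex \<Rightarrow> complex \<Rightarrow> nat \<Rightarrow> complex" where
  "rgauss_term a b c n = pochhammer a n * pochhammer b n * rGamma (c + of_nat n) / (fact n * 2 ^ n)"

definition rgauss :: "complex \<Rightarrow> complex \<Rightarrow> complex \<Rightarrow> complex" where
  "rgauss a b c = (\<Sum>n. rgauss_term a b c n)"

lemma rgauss_term_0 [simp]: "rgauss_term a b c 0 = rGamma c"
  by (simp add: rgauss_term_def)

lemma rgauss_term_eq_plus1:
  "rgauss_term a b c n = (c + of_nat n) * rgauss_term a b (c + 1) n"
  unfolding rgauss_term_def using rGamma_plus1[of "c + of_nat n"] by (simp add: add_ac)

lemma rgauss_term_Suc:
  "rgauss_term a b c (Suc n)
     = (a + of_nat n) * (b + of_nat n) / 2 * (rgauss_term a b (c + 1) n / (of_nat n + 1))"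
  unfolding rgauss_term_def pochhammer_Suc by (simp add: add_ac field_simps)

lemma summable_rgauss_term: "summable (rgauss_term a b c)"
proof (rule summable_ratio_test_LIMSEQ)
  let ?r = "\<lambda>n. norm ((a + of_nat n) / (of_nat n + 1)) * norm ((b + of_nat n) / (c + of_nat n)) / 2"
  have "(\<lambda>n. (a + of_nat n) / (of_nat n + 1)) \<longlonglongrightarrow> 1"
    using LIMSEQ_add_of_nat_divide_add_of_nat[of a 1] by (simp add: add.commute)
  then show "?r \<longlonglongrightarrow> norm (1::complex) * norm (1::complex) / 2"
    by (intro tendsto_intros LIMSEQ_add_of_nat_divide_add_of_nat) simp_all
  show "norm (1::complex) * norm (1::complex) / 2 < 1"
    by simp
  obtain N :: nat where "norm c < real N"
    using reals_Archimedean2 by blast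
  have "eventually (\<lambda>n. n \<ge> N) sequentially"
    by simp
  then show "eventually (\<lambda>n. norm (rgauss_term a b c (Suc n)) \<le> ?r n * norm (rgauss_term a b c n)) sequentially"
  proof eventually_elim
    case (elim n)
    have "c + of_nat n \<noteq> 0"
    proof
      assume "c + of_nat n = 0"
      then have "c = - of_nat n"
        by (simp add: eq_neg_iff_add_eq_0)
      then have "norm c = real n"
        by simp
      moreover have "real N \<le> real n"
        using elim by simp
      ultimately show False
        using \<open>norm c < real N\<close> by linarith
    qed
    have ratio: "x * y / 2 * (X / m) = x / m * (y / k) / 2 * (k * X)"
      if "k \<noteq> 0" and "m \<noteq> 0" for x y X k m :: complex
      using that by (simp add: field_simps)
    have "rgauss_term a b c (Suc n)
        = (a + of_nat n) / (of_nat n + 1) * ((b + of_nat n) / (c + of_nat n)) / 2 * rgauss_term a b c n"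
      unfolding rgauss_term_Suc rgauss_term_eq_plus1[of a b c n]
      by (intro ratio) (simp_all add: \<open>c + of_nat n \<noteq> 0\<close>)
    then show ?case
      by (simp add: norm_mult norm_divide)
  qed
qed

lemma rgauss_sums: "rgauss_term a b c sums rgauss a b c"
  unfolding rgauss_def by (intro summable_sums summable_rgauss_term)

lemma rgauss_contiguous_a:
  "a * rgauss (a + 1) b c = rgauss a b (c - 1) - (c - a - 1) * rgauss a b c"
proof -
  have termwise: "a * rgauss_term (a + 1) b c n
                    = rgauss_term a b (c - 1) n - (c - a - 1) * rgauss_term a b c n" for n
  proof -
    have "a * pochhammer (a + 1) n = (a + of_nat n) * pochhammer a n"
      using pochhammer_rec[of a n] pochhammer_rec'[of a n] by simp
    then have a1: "a * rgauss_term (a + 1) b c n = (a + of_nat n) * rgauss_term a b c n"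
      by (simp add: rgauss_term_def)
    have c_1: "rgauss_term a b (c - 1) n = (c - 1 + of_nat n) * rgauss_term a b c n"
      using rgauss_term_eq_plus1[of a b "c - 1" n] by simp
    show ?thesis
      unfolding a1 c_1 by (simp add: algebra_simps)
  qed
  have "(\<lambda>n. a * rgauss_term (a + 1) b c n) sums (a * rgauss (a + 1) b c)"
    by (intro sums_mult rgauss_sums)
  moreover have "(\<lambda>n. a * rgauss_term (a + 1) b c n)
                   sums (rgauss a b (c - 1) - (c - a - 1) * rgauss a b c)"
    unfolding termwise by (intro sums_diff sums_mult rgauss_sums)
  ultimately show ?thesis
    by (rule sums_unique2)
qed

lemma rgauss_contiguous_b:
  "2 * rgauss a (b - 1) c = rgauss a b c + (c - a) * rgauss a b (c + 1)"
proof -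
  let ?f = "\<lambda>n. rgauss_term a b c n - rgauss_term a (b - 1) c n"
  let ?g = "\<lambda>n. rgauss_term a b c n - (c - a) * rgauss_term a b (c + 1) n"
  have shift: "?f (Suc n) = ?g n / 2" for n
  proof -
    define Y where "Y = rgauss_term a b (c + 1) n / (of_nat n + 1)"
    have Y: "rgauss_term a b (c + 1) n = (of_nat n + 1) * Y"
      unfolding Y_def by simp
    have at_c: "rgauss_term a b c n = (c + of_nat n) * ((of_nat n + 1) * Y)"
      using rgauss_term_eq_plus1[of a b c n] unfolding Y .
    have at_c_Suc: "rgauss_term a b c (Suc n) = (a + of_nat n) * (b + of_nat n) / 2 * Y"
      unfolding Y_def by (rule rgauss_term_Suc)
    have at_b_Suc: "rgauss_term a (b - 1) c (Suc n) = (a + of_nat n) * (b - 1) / 2 * Y"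
      unfolding Y_def
      by (simp add: rgauss_term_def pochhammer_rec[of "b - 1"] pochhammer_Suc[of a] add_ac field_simps)
    show ?thesis
      unfolding at_c at_c_Suc at_b_Suc Y by (simp add: field_simps)
  qed
  have "?g sums (rgauss a b c - (c - a) * rgauss a b (c + 1))"
    by (intro sums_diff sums_mult rgauss_sums)
  then have "?f sums ((rgauss a b c - (c - a) * rgauss a b (c + 1)) / 2)"
    by (rule sums_shift_half) (simp_all add: shift)
  moreover have "?f sums (rgauss a b c - rgauss a (b - 1) c)"
    by (intro sums_diff rgauss_sums)
  ultimately have "(rgauss a b c - (c - a) * rgauss a b (c + 1)) / 2 = rgauss a b c - rgauss a (b - 1) c"
    by (rule sums_unique2)
  then show ?thesis
    by (simp add: field_simps)
qed

lemma rgauss_contiguous_c: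
  assumes "a + b = 1"
  shows "rgauss a b (c - 1) = (c - a) * (c - b) * rgauss a b (c + 1)"
proof -
  let ?f = "\<lambda>n. rgauss_term a b (c - 1) n - (c - 1) * rgauss_term a b c n"
  let ?g = "\<lambda>n. rgauss_term a b (c - 1) n - 2 * (c - 1) * rgauss_term a b c n
               + (c - a) * (c - b) * rgauss_term a b (c + 1) n"
  have b: "b = 1 - a"
    using assms by (metis add_diff_cancel_left')
  have shift: "?f (Suc n) = ?g n / 2" for n
  proof -
    define Y where "Y = rgauss_term a b (c + 1) n / (of_nat n + 1)"
    have Y: "rgauss_term a b (c + 1) n = (of_nat n + 1) * Y"
      unfolding Y_def by simp
    have at_c: "rgauss_term a b c n = (c + of_nat n) * ((of_nat n + 1) * Y)"
      using rgauss_term_eq_plus1[of a b c n] unfolding Y .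
    have at_c_minus: "rgauss_term a b (c - 1) n = (c - 1 + of_nat n) * ((c + of_nat n) * ((of_nat n + 1) * Y))"
      using rgauss_term_eq_plus1[of a b "c - 1" n] at_c by simp
    have at_c_Suc: "rgauss_term a b c (Suc n) = (a + of_nat n) * (b + of_nat n) / 2 * Y"
      unfolding Y_def by (rule rgauss_term_Suc)
    have at_c_minus_Suc: "rgauss_term a b (c - 1) (Suc n) = (a + of_nat n) * (b + of_nat n) / 2 * ((c + of_nat n) * Y)"
      using rgauss_term_Suc[of a b "c - 1" n] rgauss_term_eq_plus1[of a b c n] by (simp add: Y_def)
    show ?thesis
      unfolding at_c at_c_minus at_c_Suc at_c_minus_Suc Y by (simp add: b field_simps)
  qed
  have "?g sums (rgauss a b (c - 1) - 2 * (c - 1) * rgauss a b c + (c - a) * (c - b) * rgauss a b (c + 1))"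
    by (intro sums_add sums_diff sums_mult rgauss_sums)
  then have "?f sums ((rgauss a b (c - 1) - 2 * (c - 1) * rgauss a b c
                       + (c - a) * (c - b) * rgauss a b (c + 1)) / 2)"
    by (rule sums_shift_half) (use rGamma_plus1[of "c - 1"] in \<open>simp_all add: shift\<close>)
  moreover have "?f sums (rgauss a b (c - 1) - (c - 1) * rgauss a b c)"
    by (intro sums_diff sums_mult rgauss_sums)
  ultimately have "(rgauss a b (c - 1) - 2 * (c - 1) * rgauss a b c + (c - a) * (c - b) * rgauss a b (c + 1)) / 2
                    = rgauss a b (c - 1) - (c - 1) * rgauss a b c"
    by (rule sums_unique2)
  then show ?thesis
    by (simp add: field_simps)
qed

definition gauss_coeff :: "complex \<Rightarrow> complex \<Rightarrow> complex \<Rightarrow> nat \<Rightarrow> complex" where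
  "gauss_coeff a b c n = pochhammer a n * pochhammer b n / (pochhammer c n * fact n)"

lemma gauss_coeff_0 [simp]: "gauss_coeff a b c 0 = 1"
  by (simp add: gauss_coeff_def)

definition gauss :: "complex \<Rightarrow> complex \<Rightarrow> complex \<Rightarrow> complex" where
  "gauss a b c = (\<Sum>n. gauss_coeff a b c n / 2 ^ n)"

lemma gauss_coeff_Suc:
  assumes "c \<notin> \<int>\<^sub>\<le>\<^sub>0"
  shows "gauss_coeff a b c (Suc n) * ((c + of_nat n) * (of_nat n + 1))
           = gauss_coeff a b c n * ((a + of_nat n) * (b + of_nat n))"
proof -
  have cancel: "x * u * (y * v) / (z * w * (m * f)) * (w * m) = x * y / (z * f) * (u * v)"
    if "z \<noteq> 0" "w \<noteq> 0" "m \<noteq> 0" "f \<noteq> 0" for x y z w m f u v :: complex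
    using that by (simp add: field_simps)
  have "pochhammer c n \<noteq> 0" and "c + of_nat n \<noteq> 0"
    using assms not_nonpos_Ints_add_of_nat[OF assms, of n]
    by (auto simp: pochhammer_neq_0_if_not_nonpos_Ints)
  then show ?thesis
    unfolding gauss_coeff_def pochhammer_Suc fact_Suc of_nat_Suc add.commute[of 1]
    by (intro cancel) simp_all
qed

lemma rgauss_term_eq_rGamma_gauss_coeff:
  assumes "c \<notin> \<int>\<^sub>\<le>\<^sub>0"
  shows "rgauss_term a b c n = rGamma c * (gauss_coeff a b c n / 2 ^ n)"
  using pochhammer_neq_0_if_not_nonpos_Ints[OF assms, of n]
  unfolding rgauss_term_def gauss_coeff_def pochhammer_rGamma[of c n] by (simp add: field_simps)

lemma
  assumes "c \<notin> \<int>\<^sub>\<le>\<^sub>0"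
  shows gauss_sums: "(\<lambda>n. gauss_coeff a b c n / 2 ^ n) sums gauss a b c"
    and rgauss_eq_rGamma_gauss: "rgauss a b c = rGamma c * gauss a b c"
proof -
  have "rGamma c \<noteq> 0"
    using assms by (simp add: rGamma_eq_zero_iff)
  then have "(\<lambda>n. gauss_coeff a b c n / 2 ^ n) = (\<lambda>n. rgauss_term a b c n / rGamma c)"
    by (simp add: rgauss_term_eq_rGamma_gauss_coeff[OF assms])
  then have "summable (\<lambda>n. gauss_coeff a b c n / 2 ^ n)"
    by (simp add: summable_divide summable_rgauss_term)
  then show sums: "(\<lambda>n. gauss_coeff a b c n / 2 ^ n) sums gauss a b c"
    unfolding gauss_def by (rule summable_sums)
  have "rgauss_term a b c sums (rGamma c * gauss a b c)"
    unfolding rgauss_term_eq_rGamma_gauss_coeff[OF assms, abs_def] by (intro sums_mult sums)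
  then show "rgauss a b c = rGamma c * gauss a b c"
    using rgauss_sums sums_unique2 by blast
qed

lemma norm_gauss_coeff_Suc_le:
  fixes a b y :: complex
  defines "M \<equiv> norm a + norm b + 1"
  assumes "M \<le> Re y"
  shows "norm (gauss_coeff a b y (Suc n) / 2 ^ Suc n)
           \<le> M / Re y * (pochhammer M (Suc n) / (fact (Suc n) * 2 ^ Suc n))"
proof -
  let ?k = "Suc n"
  have "0 < M"
    unfolding M_def by (simp add: add_nonneg_pos)
  with assms have "0 < Re y"
    by linarith
  have "norm (gauss_coeff a b y ?k / 2 ^ ?k)
        = norm (pochhammer a ?k) * norm (pochhammer b ?k) / (norm (pochhammer y ?k) * (fact ?k * 2 ^ ?k))"
    by (simp add: gauss_coeff_def norm_mult norm_divide norm_power del: fact_Suc)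
  also have "\<dots> \<le> pochhammer M ?k * pochhammer M ?k / (pochhammer (Re y) ?k * (fact ?k * 2 ^ ?k))"
  proof (intro frac_le mult_mono mult_pos_pos)
    show "norm (pochhammer a ?k) \<le> pochhammer M ?k" and "norm (pochhammer b ?k) \<le> pochhammer M ?k"
      using norm_pochhammer_le pochhammer_mono_real unfolding M_def
      by (smt (verit) norm_ge_zero)+
    show "pochhammer (Re y) ?k \<le> norm (pochhammer y ?k)"
      using \<open>0 < Re y\<close> by (intro pochhammer_Re_le_norm) simp
  qed (use \<open>0 < Re y\<close> \<open>0 < M\<close> in \<open>auto intro: pochhammer_nonneg_real pochhammer_pos\<close>)
  also have "\<dots> = pochhammer M ?k / pochhammer (Re y) ?k * (pochhammer M ?k / (fact ?k * 2 ^ ?k))"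
    by simp
  also have "\<dots> \<le> M / Re y * (pochhammer M ?k / (fact ?k * 2 ^ ?k))"
    using pochhammer_Suc_divide_le[OF \<open>0 < M\<close> assms(2), of n] \<open>0 < M\<close>
    by (intro mult_right_mono divide_nonneg_nonneg) (auto intro: pochhammer_nonneg_real)
  finally show ?thesis .
qed

lemma norm_gauss_minus_1_le:
  fixes a b y :: complex
  defines "M \<equiv> norm a + norm b + 1"
  assumes "M \<le> Re y"
  shows "norm (gauss a b y - 1) \<le> M / Re y * (\<Sum>n. pochhammer M n / (fact n * 2 ^ n))"
proof -
  have "0 < M"
    unfolding M_def by (simp add: add_nonneg_pos)
  with assms have "0 < Re y"
    by linarith
  define C where "C n = pochhammer M n / (fact n * 2 ^ n)" for n
  have "summable C"
    unfolding C_def using \<open>0 < M\<close> by (intro summable_pochhammer_divide_fact_2_power) simp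
  then have summable_tail: "summable (\<lambda>n. M / Re y * C (Suc n))"
    by (intro summable_mult) (simp only: summable_Suc_iff)
  have tail: "(\<lambda>n. gauss_coeff a b y (Suc n) / 2 ^ Suc n) sums (gauss a b y - 1)"
    using gauss_sums[OF not_nonpos_Ints_if_Re_pos[OF \<open>0 < Re y\<close>], of a b]
      sums_Suc_iff[where f = "\<lambda>n. gauss_coeff a b y n / 2 ^ n" and s = "gauss a b y - 1"] by simp
  have "norm (gauss a b y - 1) \<le> (\<Sum>n. M / Re y * C (Suc n))"
    unfolding sums_unique[OF tail]
  proof (rule norm_suminf_le[OF _ summable_tail])
    show "norm (gauss_coeff a b y (Suc n) / 2 ^ Suc n) \<le> M / Re y * C (Suc n)" for n
      using norm_gauss_coeff_Suc_le[of a b y n] assms(2) unfolding M_def C_def by simp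
  qed
  also have "\<dots> = M / Re y * (\<Sum>n. C (Suc n))"
    using \<open>summable C\<close> by (intro suminf_mult) (simp add: summable_Suc_iff)
  also have "\<dots> \<le> M / Re y * suminf C"
    using suminf_split_head[OF \<open>summable C\<close>] \<open>0 < M\<close> \<open>0 < Re y\<close>
    by (intro mult_left_mono) (auto simp: C_def)
  finally show ?thesis
    unfolding C_def[abs_def] .
qed

lemma gauss_tendsto_1:
  assumes "filterlim (\<lambda>K. Re (y K)) at_top sequentially"
  shows "(\<lambda>K. gauss a b (y K)) \<longlonglongrightarrow> 1"
proof -
  define M where "M = norm a + norm b + 1"
  define C where "C = (\<Sum>n. pochhammer M n / (fact n * 2 ^ n))"
  have "(\<lambda>K. M / Re (y K) * C) \<longlonglongrightarrow> 0"
    using tendsto_mult_right_zero[OF tendsto_divide_0[OF tendsto_const filterlim_at_top_imp_at_infinity[OF assms]]]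
    by simp
  moreover have "eventually (\<lambda>K. M \<le> Re (y K)) sequentially"
    using assms by (simp add: filterlim_at_top)
  then have "eventually (\<lambda>K. norm (gauss a b (y K) - 1) \<le> M / Re (y K) * C) sequentially"
    by eventually_elim (unfold M_def C_def, erule norm_gauss_minus_1_le)
  ultimately have "(\<lambda>K. gauss a b (y K) - 1) \<longlonglongrightarrow> 0"
    by (rule Lim_null_comparison[rotated])
  then show ?thesis
    by (simp add: LIM_zero_iff)
qed

section \<open>Bailey's theorem\<close>

text \<open>
  Bailey's theorem reads \<open>F(s, 1 - s; x; 1/2) = \<surd>\<pi> 2\<^sup>1\<^sup>-\<^sup>x \<Gamma>(x) / (\<Gamma>((x + 1 - s)/2) \<Gamma>((x + s)/2))\<close>;
  \<open>bailey s x\<close> is its right-hand side divided by \<open>\<Gamma>(x)\<close>.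
\<close>

definition bailey :: "complex \<Rightarrow> complex \<Rightarrow> complex" where
  "bailey s x = of_real (sqrt pi) * 2 powr (1 - x) * rGamma ((x + 1 - s) / 2) * rGamma ((x + s) / 2)"

lemma bailey_rec: "bailey s x = (x + 1 - s) * (x + s) * bailey s (x + 2)"
proof -
  have r1: "rGamma ((x + 1 - s) / 2) = (x + 1 - s) / 2 * rGamma ((x + 2 + 1 - s) / 2)"
    and r2: "rGamma ((x + s) / 2) = (x + s) / 2 * rGamma ((x + 2 + s) / 2)"
    using rGamma_plus1[of "(x + 1 - s) / 2"] rGamma_plus1[of "(x + s) / 2"] by (simp_all add: field_simps)
  have "(2::complex) powr (1 - x) = 2 powr 2 * 2 powr (1 - (x + 2))"
    unfolding powr_add[symmetric] by simp
  also have "(2::complex) powr 2 = 4"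
    using powr_nat'[of 2 2] by simp
  finally have p: "(2::complex) powr (1 - x) = 4 * 2 powr (1 - (x + 2))" .
  show ?thesis
    unfolding bailey_def r1 r2 p by (simp add: field_simps)
qed

lemma filterlim_Re_add_of_nat_times_2: "filterlim (\<lambda>K. Re (x + of_nat K * 2)) at_top sequentially"
proof -
  have "filterlim (\<lambda>K. Re x + real K * 2) at_top sequentially"
    by (intro filterlim_tendsto_add_at_top[OF tendsto_const]
        filterlim_at_top_mult_tendsto_pos[OF tendsto_const] filterlim_real_sequentially) simp
  then show ?thesis
    by simp
qed

lemma Gamma_times_rgauss_tendsto_1:
  assumes "filterlim (\<lambda>K. Re (y K)) at_top sequentially"
  shows "(\<lambda>K. Gamma (y K) * rgauss a b (y K)) \<longlonglongrightarrow> 1"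
proof -
  have "eventually (\<lambda>K. 0 < Re (y K)) sequentially"
    using assms by (simp add: filterlim_at_top_dense)
  then have "eventually (\<lambda>K. gauss a b (y K) = Gamma (y K) * rgauss a b (y K)) sequentially"
    by eventually_elim
      (simp add: rgauss_eq_rGamma_gauss not_nonpos_Ints_if_Re_pos rGamma_inverse_Gamma Gamma_eq_zero_iff)
  with gauss_tendsto_1[OF assms] show ?thesis
    by (rule Lim_transform_eventually)
qed

lemma Gamma_times_bailey_tendsto_1:
  "(\<lambda>K. Gamma (x + of_nat K * 2) * bailey s (x + of_nat K * 2)) \<longlonglongrightarrow> 1"
proof -
  let ?y = "\<lambda>K. x + of_nat K * 2"
  have "(\<lambda>K. Gamma (x / 2 + of_nat K) * Gamma ((x + 1) / 2 + of_nat K)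
            * rGamma ((x + 1 - s) / 2 + of_nat K) * rGamma ((x + s) / 2 + of_nat K)) \<longlonglongrightarrow> 1"
    by (rule Gamma_quotient_LIMSEQ) (simp add: field_simps)
  moreover have "eventually (\<lambda>K. 0 < Re (?y K)) sequentially"
    using filterlim_Re_add_of_nat_times_2 by (simp add: filterlim_at_top_dense)
  then have "eventually (\<lambda>K. Gamma (x / 2 + of_nat K) * Gamma ((x + 1) / 2 + of_nat K)
                              * rGamma ((x + 1 - s) / 2 + of_nat K) * rGamma ((x + s) / 2 + of_nat K)
                            = Gamma (?y K) * bailey s (?y K)) sequentially"
  proof eventually_elim
    case (elim K)
    then have y: "?y K \<notin> \<int>\<^sub>\<le>\<^sub>0"
      by (rule not_nonpos_Ints_if_Re_pos)
    then have "Gamma (?y K) \<noteq> 0"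
      by (simp add: Gamma_eq_zero_iff)
    have args: "?y K / 2 = x / 2 + of_nat K" "(?y K + 1) / 2 = (x + 1) / 2 + of_nat K"
      "(?y K + 1 - s) / 2 = (x + 1 - s) / 2 + of_nat K" "(?y K + s) / 2 = (x + s) / 2 + of_nat K"
      by (simp_all add: field_simps)
    show ?case
      unfolding bailey_def Gamma_duplication_rGamma[OF y] args
      using \<open>Gamma (?y K) \<noteq> 0\<close> by (simp add: rGamma_inverse_Gamma field_simps)
  qed
  ultimately show ?thesis
    by (rule Lim_transform_eventually)
qed

lemma rgauss_bailey: "rgauss s (1 - s) x = bailey s x"
proof -
  let ?y = "\<lambda>K. x + of_nat K * 2"
  define P where "P K = (\<Prod>k<K. (?y k + 1 - s) * (?y k + s))" for K
  have rgauss_iter: "rgauss s (1 - s) x = P K * rgauss s (1 - s) (?y K)" for K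
    unfolding P_def
    by (rule iterate_recurrence)
      (use rgauss_contiguous_c[of s "1 - s" "z + 1" for z] in \<open>simp add: algebra_simps\<close>)
  have bailey_iter: "bailey s x = P K * bailey s (?y K)" for K
    unfolding P_def by (rule iterate_recurrence) (rule bailey_rec)
  have diff: "(rgauss s (1 - s) x - bailey s x) * (Gamma (?y K) * bailey s (?y K))
          = bailey s x * (Gamma (?y K) * rgauss s (1 - s) (?y K) - Gamma (?y K) * bailey s (?y K))" for K
    unfolding rgauss_iter[of K] bailey_iter[of K] by (simp add: algebra_simps)
  have "(\<lambda>K. (rgauss s (1 - s) x - bailey s x) * (Gamma (?y K) * bailey s (?y K)))
          \<longlonglongrightarrow> bailey s x * (1 - 1)"
    unfolding diff by (intro tendsto_intros Gamma_times_rgauss_tendsto_1 Gamma_times_bailey_tendsto_1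
        filterlim_Re_add_of_nat_times_2)
  moreover have "(\<lambda>K. (rgauss s (1 - s) x - bailey s x) * (Gamma (?y K) * bailey s (?y K)))
                   \<longlonglongrightarrow> (rgauss s (1 - s) x - bailey s x) * 1"
    by (intro tendsto_intros Gamma_times_bailey_tendsto_1)
  ultimately have "bailey s x * (1 - 1) = (rgauss s (1 - s) x - bailey s x) * 1"
    by (rule LIMSEQ_unique)
  then show ?thesis
    by simp
qed

lemma rgauss_bailey_shift_a:
  "pochhammer s i * rgauss (s + of_nat i) (1 - s) c
     = (\<Sum>r\<le>i. of_nat (i choose r) * ((-1) ^ r * pochhammer (c - s - of_nat i) r * bailey s (c - of_nat i + of_nat r)))"
proof (induction i arbitrary: c)
  case 0
  show ?case
    by (simp add: rgauss_bailey)
next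
  case (Suc i)
  define g where
    "g r = (-1) ^ r * pochhammer (c - s - of_nat (Suc i)) r * bailey s (c - of_nat (Suc i) + of_nat r)" for r
  have "pochhammer s (Suc i) * rgauss (s + of_nat (Suc i)) (1 - s) c
          = pochhammer s i * ((s + of_nat i) * rgauss (s + of_nat i + 1) (1 - s) c)"
    by (simp add: pochhammer_Suc add_ac mult_ac)
  also have "\<dots> = pochhammer s i * rgauss (s + of_nat i) (1 - s) (c - 1)
                    - (c - s - of_nat i - 1) * (pochhammer s i * rgauss (s + of_nat i) (1 - s) c)"
    unfolding rgauss_contiguous_a by (simp add: algebra_simps)
  also have "\<dots> = (\<Sum>r\<le>i. of_nat (i choose r) * g r) + (\<Sum>r\<le>i. of_nat (i choose r) * g (Suc r))"
  proof -
    have "pochhammer s i * rgauss (s + of_nat i) (1 - s) (c - 1) = (\<Sum>r\<le>i. of_nat (i choose r) * g r)"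
      unfolding Suc.IH g_def by (simp add: algebra_simps)
    moreover have "- (c - s - of_nat i - 1) * (pochhammer s i * rgauss (s + of_nat i) (1 - s) c)
                     = (\<Sum>r\<le>i. of_nat (i choose r) * g (Suc r))"
      unfolding Suc.IH g_def sum_distrib_left
      by (intro sum.cong refl) (simp add: pochhammer_rec algebra_simps)
    ultimately show ?thesis
      by (simp add: algebra_simps)
  qed
  also have "\<dots> = (\<Sum>r\<le>Suc i. of_nat (Suc i choose r) * g r)"
    by (rule sum_choose_Suc_split[symmetric])
  finally show ?case
    by (simp add: g_def)
qed

lemma rgauss_bailey_shift_b:
  "2 ^ j * rgauss a (1 - a - of_nat j) c
     = (\<Sum>r\<le>j. of_nat (j choose r) * (pochhammer (c - a) r * bailey a (c + of_nat r)))"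
proof (induction j arbitrary: c)
  case 0
  show ?case
    by (simp add: rgauss_bailey)
next
  case (Suc j)
  define g where "g r = pochhammer (c - a) r * bailey a (c + of_nat r)" for r
  have "2 ^ Suc j * rgauss a (1 - a - of_nat (Suc j)) c = 2 ^ j * (2 * rgauss a (1 - a - of_nat j - 1) c)"
    by (simp add: algebra_simps)
  also have "\<dots> = 2 ^ j * rgauss a (1 - a - of_nat j) c + (c - a) * (2 ^ j * rgauss a (1 - a - of_nat j) (c + 1))"
    by (simp only: rgauss_contiguous_b) (simp add: algebra_simps)
  also have "\<dots> = (\<Sum>r\<le>j. of_nat (j choose r) * g r) + (\<Sum>r\<le>j. of_nat (j choose r) * g (Suc r))"
    unfolding Suc.IH g_def sum_distrib_left
    by (simp add: pochhammer_rec algebra_simps)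
  also have "\<dots> = (\<Sum>r\<le>Suc j. of_nat (Suc j choose r) * g r)"
    by (rule sum_choose_Suc_split[symmetric])
  finally show ?case
    by (simp add: g_def)
qed

lemma pochhammer_bailey:
  assumes "D \<notin> \<int>\<^sub>\<le>\<^sub>0"
  shows "pochhammer D r * bailey s (D + s + of_nat r)
           = 2 powr (- s) * rGamma D * (Gamma ((D + of_nat r) / 2) * rGamma ((D + 2 * s + of_nat r) / 2))"
proof -
  define w where "w = D + of_nat r"
  have w: "w \<notin> \<int>\<^sub>\<le>\<^sub>0"
    unfolding w_def by (rule not_nonpos_Ints_add_of_nat[OF assms])
  have "Gamma ((w + 1) / 2) * rGamma ((w + 1) / 2) = 1"
    using not_nonpos_Ints_half(2)[OF w] by (simp add: rGamma_inverse_Gamma Gamma_eq_zero_iff)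
  moreover have "pochhammer D r * rGamma w = rGamma D"
    unfolding w_def by (rule pochhammer_rGamma[symmetric])
  moreover have "bailey s (D + s + of_nat r)
      = 2 powr (- s) * (of_real (sqrt pi) * 2 powr (1 - w)) * rGamma ((w + 1) / 2) * rGamma ((D + 2 * s + of_nat r) / 2)"
  proof -
    have "(2::complex) powr (1 - (D + s + of_nat r)) = 2 powr (- s) * 2 powr (1 - w)"
      unfolding w_def powr_add[symmetric] by (simp add: algebra_simps)
    moreover have "(D + s + of_nat r + 1 - s) / 2 = (w + 1) / 2"
      and "(D + s + of_nat r + s) / 2 = (D + 2 * s + of_nat r) / 2"
      unfolding w_def by (simp_all add: algebra_simps)
    ultimately show ?thesis
      unfolding bailey_def by (simp only: mult_ac)
  qed
  ultimately show ?thesis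
    unfolding Gamma_duplication_rGamma[OF w] w_def[symmetric] by (simp add: mult_ac)
qed

section \<open>Euler's transformation\<close>

lemma wz_certificate_identity:
  fixes A B C e m n E0 E1 X :: complex
  assumes "C = A + B + e" and "E1 * (m + 1) = E0 * (e + m)" and "m + 1 \<noteq> 0"
  shows "(m + n + 1) * (m + n + C) * E1 * X - (m + n + C - A) * (m + n + C - B) * E0 * X
           = - (E0 * X * ((A + n) * (B + n))) + E1 * X * (n * (C + n - 1))"
proof -
  have "((m + n + 1) * (m + n + C) * E1 * X - (m + n + C - A) * (m + n + C - B) * E0 * X) * (m + 1)
          = (- (E0 * X * ((A + n) * (B + n))) + E1 * X * (n * (C + n - 1))) * (m + 1)"
    using assms(1,2) by algebra
  with assms(3) show ?thesis
    by simp
qed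

text \<open>
  The coefficient of \<open>z\<^sup>N\<close> in Euler's transformation \<open>(1 - z)\<^sup>-\<^sup>e F(A, B; C; z) = F(C - A, C - B; C; z)\<close>
  for \<open>C = A + B + e\<close>, proved by Zeilberger's recurrence with the WZ certificate \<open>G\<close> below.
\<close>

lemma euler_transformation_coeff_rec:
  assumes C: "C = A + B + e" and "C \<notin> \<int>\<^sub>\<le>\<^sub>0"
  defines "t N \<equiv> \<Sum>n\<le>N. pochhammer e (N - n) / fact (N - n) * gauss_coeff A B C n"
  shows "(of_nat N + 1) * (of_nat N + C) * t (Suc N) = (of_nat N + C - A) * (of_nat N + C - B) * t N"
proof -
  define f where "f m = pochhammer e m / fact m" for m
  define G where "G n = - (f (Suc N - n) * gauss_coeff A B C n * (of_nat n * (C + of_nat n - 1)))" for n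
  have step: "(of_nat N + 1) * (of_nat N + C) * f (Suc N - n) * gauss_coeff A B C n
                - (of_nat N + C - A) * (of_nat N + C - B) * f (N - n) * gauss_coeff A B C n
              = G (Suc n) - G n" if "n \<le> N" for n
  proof -
    define m where "m = N - n"
    have N: "N = m + n" and "Suc N - n = Suc m" and "Suc N - Suc n = m"
      using that by (simp_all add: m_def)
    have "G (Suc n) = - (f m * (gauss_coeff A B C (Suc n) * ((C + of_nat n) * (of_nat n + 1))))"
      unfolding G_def \<open>Suc N - Suc n = m\<close> by (simp add: algebra_simps)
    also have "\<dots> = - (f m * gauss_coeff A B C n * ((A + of_nat n) * (B + of_nat n)))"
      unfolding gauss_coeff_Suc[OF \<open>C \<notin> \<int>\<^sub>\<le>\<^sub>0\<close>] by (simp add: mult_ac)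
    finally have Gs: "G (Suc n) = \<dots>" .
    have Gn: "G n = - (f (Suc m) * gauss_coeff A B C n * (of_nat n * (C + of_nat n - 1)))"
      unfolding G_def \<open>Suc N - n = Suc m\<close> ..
    have "f (Suc m) * (of_nat m + 1) = f m * (e + of_nat m)"
      unfolding f_def by (rule pochhammer_divide_fact_Suc)
    then have "(of_nat m + of_nat n + 1) * (of_nat m + of_nat n + C) * f (Suc m) * gauss_coeff A B C n
          - (of_nat m + of_nat n + C - A) * (of_nat m + of_nat n + C - B) * f m * gauss_coeff A B C n
          = - (f m * gauss_coeff A B C n * ((A + of_nat n) * (B + of_nat n)))
            + f (Suc m) * gauss_coeff A B C n * (of_nat n * (C + of_nat n - 1))"
      by (rule wz_certificate_identity[OF C]) simp
    then show ?thesis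
      unfolding Gs Gn N \<open>Suc N - n = Suc m\<close> m_def[symmetric] by simp
  qed
  have "(\<Sum>n\<le>N. (of_nat N + 1) * (of_nat N + C) * f (Suc N - n) * gauss_coeff A B C n
                - (of_nat N + C - A) * (of_nat N + C - B) * f (N - n) * gauss_coeff A B C n)
          = (\<Sum>n<Suc N. G (Suc n) - G n)"
    unfolding lessThan_Suc_atMost by (intro sum.cong refl step) simp
  also have "\<dots> = - (gauss_coeff A B C (Suc N) * ((of_nat N + 1) * (of_nat N + C)))"
    unfolding sum_lessThan_telescope by (simp add: G_def f_def algebra_simps)
  finally have "(of_nat N + 1) * (of_nat N + C) * (\<Sum>n\<le>N. f (Suc N - n) * gauss_coeff A B C n)
                  - (of_nat N + C - A) * (of_nat N + C - B) * t N
                = - (gauss_coeff A B C (Suc N) * ((of_nat N + 1) * (of_nat N + C)))"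
    unfolding t_def f_def sum_subtractf sum_distrib_left by (simp add: mult_ac)
  moreover have "t (Suc N) = (\<Sum>n\<le>N. f (Suc N - n) * gauss_coeff A B C n) + gauss_coeff A B C (Suc N)"
    unfolding t_def f_def by simp
  ultimately show ?thesis
    by (simp add: algebra_simps)
qed

lemma euler_transformation_coeff:
  assumes "C = A + B + e" and "C \<notin> \<int>\<^sub>\<le>\<^sub>0"
  shows "(\<Sum>n\<le>N. pochhammer e (N - n) / fact (N - n) * gauss_coeff A B C n) = gauss_coeff (C - A) (C - B) C N"
proof (induction N)
  case (Suc N)
  have "C + of_nat N \<noteq> 0"
    using not_nonpos_Ints_add_of_nat[OF assms(2), of N] by auto
  then have "(of_nat N + 1) * (of_nat N + C) \<noteq> 0"
    by (metis mult_eq_0_iff of_nat_add_1_neq_0 add.commute)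
  moreover have "(of_nat N + 1) * (of_nat N + C) * (\<Sum>n\<le>Suc N. pochhammer e (Suc N - n) / fact (Suc N - n) * gauss_coeff A B C n)
      = (of_nat N + C - A) * (of_nat N + C - B) * gauss_coeff (C - A) (C - B) C N"
    using euler_transformation_coeff_rec[OF assms, of N] Suc.IH by simp
  moreover have "\<dots> = (of_nat N + 1) * (of_nat N + C) * gauss_coeff (C - A) (C - B) C (Suc N)"
    using gauss_coeff_Suc[OF assms(2), of "C - A" "C - B" N] by (simp add: algebra_simps)
  ultimately show ?case
    by simp
qed simp

section \<open>The Kampe de Feriet function\<close>

lemma kdf_term_eq_gauss_coeff:
  assumes "\<beta> \<notin> \<int>\<^sub>\<le>\<^sub>0" and "d \<notin> \<int>\<^sub>\<le>\<^sub>0"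
  shows "kdf_term [\<alpha>] [\<epsilon>] [\<gamma>, \<delta>] [\<beta>] [] [d] (1/2) (1/2) m n
           = pochhammer \<alpha> (m + n) / pochhammer \<beta> (m + n) / 2 ^ (m + n)
             * (pochhammer \<epsilon> m / fact m * gauss_coeff \<gamma> \<delta> d n)"
  using pochhammer_neq_0_if_not_nonpos_Ints[OF assms(1), of "m + n"]
    pochhammer_neq_0_if_not_nonpos_Ints[OF assms(2), of n]
  unfolding kdf_term_def gauss_coeff_def by (simp add: power_add field_simps power_one_over)

lemma kdf_eq_Gamma_rgauss:
  assumes "kdf_converges [\<alpha>] [\<epsilon>] [\<beta> - \<epsilon>, \<gamma>] [\<beta>] [] [d] (1/2) (1/2)"
    and "\<beta> \<notin> \<int>\<^sub>\<le>\<^sub>0" and "d \<notin> \<int>\<^sub>\<le>\<^sub>0" and "d = \<gamma> + \<beta>"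
  shows "kdf [\<alpha>] [\<epsilon>] [\<beta> - \<epsilon>, \<gamma>] [\<beta>] [] [d] (1/2) (1/2) = Gamma d * rgauss \<alpha> (\<gamma> + \<epsilon>) d"
proof -
  let ?f = "\<lambda>(m, n). kdf_term [\<alpha>] [\<epsilon>] [\<beta> - \<epsilon>, \<gamma>] [\<beta>] [] [d] (1/2) (1/2) m n"
  have "(\<Sum>n\<le>N. ?f (N - n, n)) = gauss_coeff \<alpha> (\<gamma> + \<epsilon>) d N / 2 ^ N" for N
  proof -
    have "(\<Sum>n\<le>N. ?f (N - n, n))
            = pochhammer \<alpha> N / pochhammer \<beta> N / 2 ^ N
              * (\<Sum>n\<le>N. pochhammer \<epsilon> (N - n) / fact (N - n) * gauss_coeff (\<beta> - \<epsilon>) \<gamma> d n)"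
      unfolding sum_distrib_left by (intro sum.cong refl) (simp add: kdf_term_eq_gauss_coeff[OF assms(2,3)])
    also have "\<dots> = pochhammer \<alpha> N / pochhammer \<beta> N / 2 ^ N * gauss_coeff (\<gamma> + \<epsilon>) \<beta> d N"
      using euler_transformation_coeff[of d "\<beta> - \<epsilon>" \<gamma> \<epsilon> N] assms(3,4) by simp
    also have "\<dots> = gauss_coeff \<alpha> (\<gamma> + \<epsilon>) d N / 2 ^ N"
      using pochhammer_neq_0_if_not_nonpos_Ints[OF assms(2), of N]
      unfolding gauss_coeff_def by (simp add: field_simps)
    finally show ?thesis .
  qed
  then have "kdf [\<alpha>] [\<epsilon>] [\<beta> - \<epsilon>, \<gamma>] [\<beta>] [] [d] (1/2) (1/2) = gauss \<alpha> (\<gamma> + \<epsilon>) d"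
    using assms(1) unfolding kdf_def kdf_converges_def gauss_def
    by (simp add: infsum_diagonal)
  also have "\<dots> = Gamma d * rgauss \<alpha> (\<gamma> + \<epsilon>) d"
    using assms(3) by (simp add: rgauss_eq_rGamma_gauss rGamma_inverse_Gamma Gamma_eq_zero_iff)
  finally show ?thesis .
qed

lemma rgauss_closed_form_plus:
  assumes "s \<notin> \<int>\<^sub>\<le>\<^sub>0" and "D \<notin> \<int>\<^sub>\<le>\<^sub>0"
  shows "rgauss (s + of_nat i) (1 - s) (D + s + of_nat i)
           = 2 powr (- s) * Gamma s / Gamma (s + of_nat i) * rGamma D
             * (\<Sum>r\<le>i. (-1) ^ r * of_nat (i choose r)
                  * (Gamma ((D + of_nat r) / 2) * rGamma ((D + 2 * s + of_nat r) / 2)))"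
proof -
  have "pochhammer s i * rgauss (s + of_nat i) (1 - s) (D + s + of_nat i)
          = 2 powr (- s) * rGamma D * (\<Sum>r\<le>i. (-1) ^ r * of_nat (i choose r)
              * (Gamma ((D + of_nat r) / 2) * rGamma ((D + 2 * s + of_nat r) / 2)))"
    unfolding rgauss_bailey_shift_a sum_distrib_left
  proof (intro sum.cong refl)
    fix r
    have "D + s + of_nat i - s - of_nat i = D" and "D + s + of_nat i - of_nat i + of_nat r = D + s + of_nat r"
      by simp_all
    then show "of_nat (i choose r) * ((-1) ^ r * pochhammer (D + s + of_nat i - s - of_nat i) r
                 * bailey s (D + s + of_nat i - of_nat i + of_nat r))
        = 2 powr (- s) * rGamma D * ((-1) ^ r * of_nat (i choose r)
            * (Gamma ((D + of_nat r) / 2) * rGamma ((D + 2 * s + of_nat r) / 2)))"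
      using pochhammer_bailey[OF assms(2), of r s] by (simp only:) (simp add: mult_ac)
  qed
  moreover have "pochhammer s i = Gamma (s + of_nat i) / Gamma s" and "Gamma s \<noteq> 0"
    and "Gamma (s + of_nat i) \<noteq> 0"
    using assms(1) not_nonpos_Ints_add_of_nat[OF assms(1), of i]
    by (simp_all add: pochhammer_Gamma Gamma_eq_zero_iff)
  ultimately show ?thesis
    by (simp add: field_simps)
qed

lemma rgauss_closed_form_minus:
  assumes "D \<notin> \<int>\<^sub>\<le>\<^sub>0"
  shows "rgauss a (1 - a - of_nat i) (D + a)
           = 2 powr (- a) / 2 ^ i * rGamma D
             * (\<Sum>r\<le>i. of_nat (i choose r) * (Gamma ((D + of_nat r) / 2) * rGamma ((D + 2 * a + of_nat r) / 2)))"
proof -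
  have "2 ^ i * rgauss a (1 - a - of_nat i) (D + a)
          = 2 powr (- a) * rGamma D
            * (\<Sum>r\<le>i. of_nat (i choose r) * (Gamma ((D + of_nat r) / 2) * rGamma ((D + 2 * a + of_nat r) / 2)))"
    unfolding rgauss_bailey_shift_b sum_distrib_left
  proof (intro sum.cong refl)
    fix r
    have "D + a - a = D" and "D + a + of_nat r = D + a + of_nat r"
      by simp_all
    then show "of_nat (i choose r) * (pochhammer (D + a - a) r * bailey a (D + a + of_nat r))
        = 2 powr (- a) * rGamma D
          * (of_nat (i choose r) * (Gamma ((D + of_nat r) / 2) * rGamma ((D + 2 * a + of_nat r) / 2)))"
      using pochhammer_bailey[OF assms, of r a] by (simp only:) (simp add: mult_ac)
  qed
  then show ?thesis
    by (simp add: field_simps)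
qed

lemma kdf_closed_form_plus:
  fixes i :: nat and \<alpha> \<beta> \<epsilon> :: complex
  assumes conv: "kdf_converges [\<alpha>] [\<epsilon>] [\<beta> - \<epsilon>, 1 - \<alpha> - \<epsilon> + of_nat i]
                   [\<beta>] [] [1 - \<alpha> - \<epsilon> + \<beta> + of_nat i] (1/2) (1/2)"
    and "\<beta> \<notin> \<int>\<^sub>\<le>\<^sub>0" and "1 - \<alpha> - \<epsilon> + \<beta> + of_nat i \<notin> \<int>\<^sub>\<le>\<^sub>0"
    and "\<alpha> - of_nat i \<notin> \<int>\<^sub>\<le>\<^sub>0" and "1 - 2*\<alpha> - \<epsilon> + \<beta> + of_nat i \<notin> \<int>\<^sub>\<le>\<^sub>0"
  shows "kdf [\<alpha>] [\<epsilon>] [\<beta> - \<epsilon>, 1 - \<alpha> - \<epsilon> + of_nat i]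
             [\<beta>] [] [1 - \<alpha> - \<epsilon> + \<beta> + of_nat i] (1/2) (1/2)
    = 2 powr (of_nat i - \<alpha>) * Gamma (\<beta> - \<epsilon> - \<alpha> + of_nat i + 1) * Gamma (\<alpha> - of_nat i)
        / (Gamma (1 - 2*\<alpha> - \<epsilon> + \<beta> + of_nat i) * Gamma \<alpha>)
      * (\<Sum>r=0..i. (-1) ^ r * of_nat (i choose r)
           * Gamma ((1 - 2*\<alpha> - \<epsilon> + \<beta> + of_nat i + of_nat r) / 2)
           / Gamma ((\<beta> - \<epsilon> - of_nat i + of_nat r + 1) / 2))"
proof -
  define s where "s = \<alpha> - of_nat i"
  define D where "D = 1 - 2*\<alpha> - \<epsilon> + \<beta> + of_nat i"
  define S where "S = (\<Sum>r\<le>i. (-1) ^ r * of_nat (i choose r)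
                        * (Gamma ((D + of_nat r) / 2) * rGamma ((D + 2 * s + of_nat r) / 2)))"
  have d: "1 - \<alpha> - \<epsilon> + \<beta> + of_nat i = (1 - \<alpha> - \<epsilon> + of_nat i) + \<beta>"
    and b: "1 - \<alpha> - \<epsilon> + of_nat i + \<epsilon> = 1 - s"
    and args: "\<alpha> = s + of_nat i" "1 - \<alpha> - \<epsilon> + \<beta> + of_nat i = D + s + of_nat i"
      "\<beta> - \<epsilon> - \<alpha> + of_nat i + 1 = D + s + of_nat i" "of_nat i - \<alpha> = - s"
      "\<beta> - \<epsilon> - of_nat i + of_nat r + 1 = D + 2 * s + of_nat r" for r
    by (simp_all add: s_def D_def algebra_simps)
  have sum: "(\<Sum>r=0..i. (-1) ^ r * of_nat (i choose r) * Gamma ((D + of_nat r) / 2)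
               / Gamma ((D + 2 * s + of_nat r) / 2)) = S"
    unfolding S_def atLeast0AtMost by (simp only: rGamma_inverse_Gamma divide_inverse mult.assoc)
  have "s \<notin> \<int>\<^sub>\<le>\<^sub>0" and "D \<notin> \<int>\<^sub>\<le>\<^sub>0" and "Gamma D \<noteq> 0"
    using assms(4,5) by (simp_all add: s_def D_def Gamma_eq_zero_iff)
  then have kdf: "kdf [\<alpha>] [\<epsilon>] [\<beta> - \<epsilon>, 1 - \<alpha> - \<epsilon> + of_nat i] [\<beta>] [] [1 - \<alpha> - \<epsilon> + \<beta> + of_nat i] (1/2) (1/2)
      = Gamma (D + s + of_nat i) * (2 powr (- s) * Gamma s / Gamma \<alpha> * rGamma D * S)"
    using kdf_eq_Gamma_rgauss[OF conv assms(2,3) d]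
      rgauss_closed_form_plus[OF \<open>s \<notin> \<int>\<^sub>\<le>\<^sub>0\<close> \<open>D \<notin> \<int>\<^sub>\<le>\<^sub>0\<close>, of i, folded args(1)]
    unfolding b S_def by (simp only: args(2))
  show ?thesis
    unfolding kdf args(3-5) s_def[symmetric] D_def[symmetric] sum
    using \<open>Gamma D \<noteq> 0\<close> by (simp add: rGamma_inverse_Gamma field_simps)
qed

lemma kdf_closed_form_minus:
  fixes i :: nat and \<alpha> \<beta> \<epsilon> :: complex
  assumes conv: "kdf_converges [\<alpha>] [\<epsilon>] [\<beta> - \<epsilon>, 1 - \<alpha> - \<epsilon> - of_nat i]
                   [\<beta>] [] [1 - \<alpha> - \<epsilon> + \<beta> - of_nat i] (1/2) (1/2)"
    and "\<beta> \<notin> \<int>\<^sub>\<le>\<^sub>0" and "1 - \<alpha> - \<epsilon> + \<beta> - of_nat i \<notin> \<int>\<^sub>\<le>\<^sub>0"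
    and "1 - 2*\<alpha> - \<epsilon> + \<beta> - of_nat i \<notin> \<int>\<^sub>\<le>\<^sub>0"
  shows "kdf [\<alpha>] [\<epsilon>] [\<beta> - \<epsilon>, 1 - \<alpha> - \<epsilon> - of_nat i]
             [\<beta>] [] [1 - \<alpha> - \<epsilon> + \<beta> - of_nat i] (1/2) (1/2)
    = 2 powr (- \<alpha> - of_nat i) * Gamma (\<beta> - \<epsilon> - \<alpha> - of_nat i + 1)
        / Gamma (1 - 2*\<alpha> - \<epsilon> + \<beta> - of_nat i)
      * (\<Sum>r=0..i. of_nat (i choose r)
           * Gamma ((1 - 2*\<alpha> - \<epsilon> + \<beta> - of_nat i + of_nat r) / 2)
           / Gamma ((\<beta> - \<epsilon> - of_nat i + of_nat r + 1) / 2))"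
proof -
  define D where "D = 1 - 2*\<alpha> - \<epsilon> + \<beta> - of_nat i"
  define S where "S = (\<Sum>r\<le>i. of_nat (i choose r)
                        * (Gamma ((D + of_nat r) / 2) * rGamma ((D + 2 * \<alpha> + of_nat r) / 2)))"
  have d: "1 - \<alpha> - \<epsilon> + \<beta> - of_nat i = (1 - \<alpha> - \<epsilon> - of_nat i) + \<beta>"
    and b: "1 - \<alpha> - \<epsilon> - of_nat i + \<epsilon> = 1 - \<alpha> - of_nat i"
    and args: "1 - \<alpha> - \<epsilon> + \<beta> - of_nat i = D + \<alpha>" "\<beta> - \<epsilon> - \<alpha> - of_nat i + 1 = D + \<alpha>"
      "\<beta> - \<epsilon> - of_nat i + of_nat r + 1 = D + 2 * \<alpha> + of_nat r" for r
    by (simp_all add: D_def algebra_simps)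
  have sum: "(\<Sum>r=0..i. of_nat (i choose r) * Gamma ((D + of_nat r) / 2)
               / Gamma ((D + 2 * \<alpha> + of_nat r) / 2)) = S"
    unfolding S_def atLeast0AtMost by (simp only: rGamma_inverse_Gamma divide_inverse mult.assoc)
  have pw: "(2::complex) powr (- \<alpha> - of_nat i) = 2 powr (- \<alpha>) / 2 ^ i"
    using powr_nat'[of 2 i] by (simp add: powr_diff)
  have "D \<notin> \<int>\<^sub>\<le>\<^sub>0" and "Gamma D \<noteq> 0"
    using assms(4) by (simp_all add: D_def Gamma_eq_zero_iff)
  have kdf: "kdf [\<alpha>] [\<epsilon>] [\<beta> - \<epsilon>, 1 - \<alpha> - \<epsilon> - of_nat i] [\<beta>] [] [1 - \<alpha> - \<epsilon> + \<beta> - of_nat i] (1/2) (1/2)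
      = Gamma (D + \<alpha>) * (2 powr (- \<alpha>) / 2 ^ i * rGamma D * S)"
    using kdf_eq_Gamma_rgauss[OF conv assms(2,3) d] rgauss_closed_form_minus[OF \<open>D \<notin> \<int>\<^sub>\<le>\<^sub>0\<close>, of \<alpha> i]
    unfolding b S_def by (simp only: args(1))
  show ?thesis
    unfolding kdf pw args(2,3) D_def[symmetric] sum
    using \<open>Gamma D \<noteq> 0\<close> by (simp add: rGamma_inverse_Gamma field_simps)
qed

theorem theorem1:
  fixes i :: nat and \<alpha> \<beta> \<epsilon> :: complex
  shows
  "(kdf_converges [\<alpha>] [\<epsilon>] [\<beta> - \<epsilon>, 1 - \<alpha> - \<epsilon> + of_nat i]
                  [\<beta>] [] [1 - \<alpha> - \<epsilon> + \<beta> + of_nat i] (1/2) (1/2)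
    \<and> \<beta> \<notin> \<int>\<^sub>\<le>\<^sub>0 \<and> 1 - \<alpha> - \<epsilon> + \<beta> + of_nat i \<notin> \<int>\<^sub>\<le>\<^sub>0
    \<and> \<beta> - \<epsilon> - \<alpha> + of_nat i + 1 \<notin> \<int>\<^sub>\<le>\<^sub>0
    \<and> \<alpha> - of_nat i \<notin> \<int>\<^sub>\<le>\<^sub>0
    \<and> 1 - 2*\<alpha> - \<epsilon> + \<beta> + of_nat i \<notin> \<int>\<^sub>\<le>\<^sub>0
    \<and> \<alpha> \<notin> \<int>\<^sub>\<le>\<^sub>0
    \<and> (\<forall>r\<le>i. (1 - 2*\<alpha> - \<epsilon> + \<beta> + of_nat i + of_nat r) / 2 \<notin> \<int>\<^sub>\<le>\<^sub>0
              \<and> (\<beta> - \<epsilon> - of_nat i + of_nat r + 1) / 2 \<notin> \<int>\<^sub>\<le>\<^sub>0)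
    \<longrightarrow>
    kdf [\<alpha>] [\<epsilon>] [\<beta> - \<epsilon>, 1 - \<alpha> - \<epsilon> + of_nat i]
        [\<beta>] [] [1 - \<alpha> - \<epsilon> + \<beta> + of_nat i] (1/2) (1/2)
    = 2 powr (of_nat i - \<alpha>) * Gamma (\<beta> - \<epsilon> - \<alpha> + of_nat i + 1) * Gamma (\<alpha> - of_nat i)
        / (Gamma (1 - 2*\<alpha> - \<epsilon> + \<beta> + of_nat i) * Gamma \<alpha>)
      * (\<Sum>r=0..i. (-1) ^ r * of_nat (i choose r)
           * Gamma ((1 - 2*\<alpha> - \<epsilon> + \<beta> + of_nat i + of_nat r) / 2)
           / Gamma ((\<beta> - \<epsilon> - of_nat i + of_nat r + 1) / 2)))
   \<and>
   (kdf_converges [\<alpha>] [\<epsilon>] [\<beta> - \<epsilon>, 1 - \<alpha> - \<epsilon> - of_nat i]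
                  [\<beta>] [] [1 - \<alpha> - \<epsilon> + \<beta> - of_nat i] (1/2) (1/2)
    \<and> \<beta> \<notin> \<int>\<^sub>\<le>\<^sub>0 \<and> 1 - \<alpha> - \<epsilon> + \<beta> - of_nat i \<notin> \<int>\<^sub>\<le>\<^sub>0
    \<and> \<beta> - \<epsilon> - \<alpha> - of_nat i + 1 \<notin> \<int>\<^sub>\<le>\<^sub>0
    \<and> 1 - 2*\<alpha> - \<epsilon> + \<beta> - of_nat i \<notin> \<int>\<^sub>\<le>\<^sub>0
    \<and> (\<forall>r\<le>i. (1 - 2*\<alpha> - \<epsilon> + \<beta> - of_nat i + of_nat r) / 2 \<notin> \<int>\<^sub>\<le>\<^sub>0
              \<and> (\<beta> - \<epsilon> - of_nat i + of_nat r + 1) / 2 \<notin> \<int>\<^sub>\<le>\<^sub>0)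
    \<longrightarrow>
    kdf [\<alpha>] [\<epsilon>] [\<beta> - \<epsilon>, 1 - \<alpha> - \<epsilon> - of_nat i]
        [\<beta>] [] [1 - \<alpha> - \<epsilon> + \<beta> - of_nat i] (1/2) (1/2)
    = 2 powr (- \<alpha> - of_nat i) * Gamma (\<beta> - \<epsilon> - \<alpha> - of_nat i + 1)
        / Gamma (1 - 2*\<alpha> - \<epsilon> + \<beta> - of_nat i)
      * (\<Sum>r=0..i. of_nat (i choose r)
           * Gamma ((1 - 2*\<alpha> - \<epsilon> + \<beta> - of_nat i + of_nat r) / 2)
           / Gamma ((\<beta> - \<epsilon> - of_nat i + of_nat r + 1) / 2)))"
  by (intro conjI impI; elim conjE) (rule kdf_closed_form_plus kdf_closed_form_minus; assumption)+

end
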